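(* Let $\mathcal{X}\subseteq\mathbb{R}^d$, let $k$ be a positive definite kernel on $\mathcal{X}$ with RKHS $H_k$, and let $f\in H_k$ with $\|f\|_{H_k}\le B$ for some $B>0$. Let $\lambda>0$, $n\ge1$, let $x_1,\dots,x_n\in\mathcal{X}$ and observations $y_i=f(x_i)+\epsilon_i$, where $\epsilon_1,\dots,\epsilon_n$ are i.i.d. zero-mean real random variables such that, for some $h_0>0$ and $\xi_0>0$, $\mathbb{E}[e^{h\epsilon_i}]\le\exp(h^2\xi_0/2)$ for all $|h|\le h_0$; assume $X_n=[x_1,\dots,x_n]^\top$ is independent of $E_n=[\epsilon_1,\dots,\epsilon_n]^\top$. Let $\mu_n,\sigma_n$ be as below. For $\delta\in(0,1)$ set $$\beta(\delta)=\frac{1}{\lambda}\sqrt{2\left(\xi_0\vee\frac{2\log(1/\delta)}{h_0^2}\right)\log(1/\delta)},$$ where $a\vee b=\max(a,b)$. Then for every fixed $x\in\mathcal{X}$, $$\Pr\big[f(x)\le \mu_n(x)+(B+\beta(\delta))\sigma_n(x)\big]\ge 1-\delta\quad\text{and}\quad \Pr\big[f(x)\ge \mu_n(x)-(B+\beta(\delta))\sigma_n(x)\big]\ge 1-\delta.$$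
   Context: $\mu_n(x)=k(x,X_n)^\top(k(X_n,X_n)+\lambda^2I_n)^{-1}Y_n$ with $Y_n=[y_1,\dots,y_n]^\top$, and $\sigma_n^2(x)=k(x,x)-k(x,X_n)^\top(k(X_n,X_n)+\lambda^2I_n)^{-1}k(x,X_n)$, where $k(x,X_n)=[k(x,x_1),\dots,k(x,x_n)]^\top$, $k(X_n,X_n)=[k(x_i,x_j)]_{i,j=1}^n$, $I_n$ the identity. *)

theory Defs
  imports "HOL-Analysis.Analysis" "HOL-Probability.Probability"
begin

definition pd_kernel :: "'x set \<Rightarrow> ('x \<Rightarrow> 'x \<Rightarrow> real) \<Rightarrow> bool" where
  "pd_kernel X k \<longleftrightarrow>
     (\<forall>x\<in>X. \<forall>y\<in>X. k x y = k y x) \<and>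
     (\<forall>(m::nat) (z::nat \<Rightarrow> 'x) (a::nat \<Rightarrow> real). (\<forall>i<m. z i \<in> X) \<longrightarrow>
        0 \<le> (\<Sum>i<m. \<Sum>j<m. a i * a j * k (z i) (z j)))"

text \<open>Pre-RKHS: finite combinations sum_z alpha(z) k(z,.) with centres in X.\<close>
definition supp_coef :: "('x \<Rightarrow> real) \<Rightarrow> 'x set" where
  "supp_coef \<alpha> = {z. \<alpha> z \<noteq> 0}"

definition fin_coef :: "'x set \<Rightarrow> ('x \<Rightarrow> real) \<Rightarrow> bool" where
  "fin_coef X \<alpha> \<longleftrightarrow> finite (supp_coef \<alpha>) \<and> supp_coef \<alpha> \<subseteq> X"

definition pre_fun :: "('x \<Rightarrow> 'x \<Rightarrow> real) \<Rightarrow> ('x \<Rightarrow> real) \<Rightarrow> 'x \<Rightarrow> real" where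
  "pre_fun k \<alpha> x = (\<Sum>z\<in>supp_coef \<alpha>. \<alpha> z * k z x)"

definition pre_sqnorm :: "('x \<Rightarrow> 'x \<Rightarrow> real) \<Rightarrow> ('x \<Rightarrow> real) \<Rightarrow> real" where
  "pre_sqnorm k \<alpha> = (\<Sum>z\<in>supp_coef \<alpha>. \<Sum>w\<in>supp_coef \<alpha>. \<alpha> z * \<alpha> w * k z w)"

text \<open>Moore--Aronszajn construction of H_k: f is in H_k with norm at most B iff f is the
  pointwise limit on X of a Cauchy sequence (in the pre-RKHS norm) of finite combinations,
  and the limit of their norms (= the RKHS norm of f) is at most B.\<close>
definition in_rkhs_ball :: "'x set \<Rightarrow> ('x \<Rightarrow> 'x \<Rightarrow> real) \<Rightarrow> ('x \<Rightarrow> real) \<Rightarrow> real \<Rightarrow> bool" where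
  "in_rkhs_ball X k f B \<longleftrightarrow>
     (\<exists>\<alpha>::nat \<Rightarrow> 'x \<Rightarrow> real.
        (\<forall>j. fin_coef X (\<alpha> j)) \<and>
        (\<forall>e>0. \<exists>N. \<forall>p\<ge>N. \<forall>q\<ge>N. pre_sqnorm k (\<alpha> p - \<alpha> q) < e) \<and>
        (\<forall>x\<in>X. (\<lambda>j. pre_fun k (\<alpha> j) x) \<longlonglongrightarrow> f x) \<and>
        (\<exists>L. (\<lambda>j. sqrt (pre_sqnorm k (\<alpha> j))) \<longlonglongrightarrow> L \<and> L \<le> B))"

text \<open>GP posterior mean and variance; samples indexed by a finite type 'n (n = CARD('n)).\<close>
definition gram :: "('x \<Rightarrow> 'x \<Rightarrow> real) \<Rightarrow> ('n::finite \<Rightarrow> 'x) \<Rightarrow> real^'n^'n" where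
  "gram k Xn = (\<chi> i j. k (Xn i) (Xn j))"

definition kvec :: "('x \<Rightarrow> 'x \<Rightarrow> real) \<Rightarrow> ('n::finite \<Rightarrow> 'x) \<Rightarrow> 'x \<Rightarrow> real^'n" where
  "kvec k Xn x = (\<chi> i. k x (Xn i))"

definition gp_mean :: "('x \<Rightarrow> 'x \<Rightarrow> real) \<Rightarrow> real \<Rightarrow> ('n::finite \<Rightarrow> 'x) \<Rightarrow> real^'n \<Rightarrow> 'x \<Rightarrow> real" where
  "gp_mean k lam Xn Y x =
     kvec k Xn x \<bullet> (matrix_inv (gram k Xn + (lam^2) *\<^sub>R mat 1) *v Y)"

definition gp_var :: "('x \<Rightarrow> 'x \<Rightarrow> real) \<Rightarrow> real \<Rightarrow> ('n::finite \<Rightarrow> 'x) \<Rightarrow> 'x \<Rightarrow> real" where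
  "gp_var k lam Xn x =
     k x x - kvec k Xn x \<bullet> (matrix_inv (gram k Xn + (lam^2) *\<^sub>R mat 1) *v kvec k Xn x)"

definition gp_sd :: "('x \<Rightarrow> 'x \<Rightarrow> real) \<Rightarrow> real \<Rightarrow> ('n::finite \<Rightarrow> 'x) \<Rightarrow> 'x \<Rightarrow> real" where
  "gp_sd k lam Xn x = sqrt (gp_var k lam Xn x)"

definition conf_beta :: "real \<Rightarrow> real \<Rightarrow> real \<Rightarrow> real \<Rightarrow> real" where
  "conf_beta lam xi0 h0 \<delta> =
     (1 / lam) * sqrt (2 * max xi0 (2 * ln (1 / \<delta>) / h0^2) * ln (1 / \<delta>))"

end

theory Submission
  imports Defs
begin

text \<open>The posterior mean is linear in the observations: with the weights
  \<open>a = (K + \<lambda>\<^sup>2 I)\<^sup>-\<^sup>1 k(x, X\<^sub>n)\<close> one has \<open>\<mu>\<^sub>n(x) = a \<cdot> f(X\<^sub>n) + a \<cdot> E\<^sub>n\<close>, and the posterior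
  variance splits as \<open>\<sigma>\<^sub>n(x)\<^sup>2 = \<parallel>k(x,\<cdot>) - \<Sum>\<^sub>i a\<^sub>i k(x\<^sub>i,\<cdot>)\<parallel>\<^sup>2 + \<lambda>\<^sup>2 \<parallel>a\<parallel>\<^sup>2\<close>.
  The reproducing property and Cauchy--Schwarz in \<open>H\<^sub>k\<close> bound the noise-free error
  \<open>\<bar>f(x) - a \<cdot> f(X\<^sub>n)\<bar>\<close> by \<open>B\<close> times the first summand, hence by \<open>B \<sigma>\<^sub>n(x)\<close>, while the second
  summand gives \<open>\<lambda> \<parallel>a\<parallel> \<le> \<sigma>\<^sub>n(x)\<close>. Conditionally on \<open>X\<^sub>n\<close> the weights are fixed, and by
  independence of the noise and the Chernoff bound \<open>a \<cdot> E\<^sub>n > \<lambda> \<beta>(\<delta>) \<parallel>a\<parallel>\<close> has probability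
  at most \<open>\<delta>\<close>; integrating over \<open>X\<^sub>n\<close> (Fubini for the independent pair) gives each one-sided
  bound.\<close>

section \<open>Interpolation error in the RKHS ball\<close>

lemma pd_kernel_quadratic_form_nonneg:
  assumes kernel: "pd_kernel X k" and I: "finite I" and z: "z ` I \<subseteq> X"
  shows "0 \<le> (\<Sum>i\<in>I. \<Sum>j\<in>I. c i * c j * k (z i) (z j))"
proof -
  obtain h where h: "bij_betw h {..<card I} I"
    using ex_bij_betw_nat_finite[OF I] by (auto simp: lessThan_atLeast0)
  have "\<forall>i<card I. (z \<circ> h) i \<in> X"
    using bij_betwE[OF h] z by auto
  then have "0 \<le> (\<Sum>i<card I. \<Sum>j<card I. (c \<circ> h) i * (c \<circ> h) j * k ((z \<circ> h) i) ((z \<circ> h) j))"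
    using kernel unfolding pd_kernel_def by blast
  also have "\<dots> = (\<Sum>i<card I. \<Sum>j\<in>I. c (h i) * c j * k (z (h i)) (z j))"
    unfolding comp_def by (intro sum.cong refl sum.reindex_bij_betw[OF h])
  also have "\<dots> = (\<Sum>i\<in>I. \<Sum>j\<in>I. c i * c j * k (z i) (z j))"
    by (rule sum.reindex_bij_betw[OF h])
  finally show ?thesis .
qed

lemma quadratic_nonneg_imp_discriminant_le:
  fixes a b c :: real
  assumes nonneg: "\<And>t. 0 \<le> a + 2 * t * b + t^2 * c" and "0 \<le> c"
  shows "b^2 \<le> a * c"
proof (cases "c = 0")
  case True
  have "b = 0"
  proof (rule ccontr)
    assume "b \<noteq> 0"
    have "0 \<le> a + 2 * (- (\<bar>a\<bar> + 1) / (2 * b)) * b"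
      using nonneg[of "- (\<bar>a\<bar> + 1) / (2 * b)"] True by simp
    also have "\<dots> = a - (\<bar>a\<bar> + 1)"
      using \<open>b \<noteq> 0\<close> by (simp add: field_simps)
    finally show False by linarith
  qed
  with True show ?thesis by simp
next
  case False
  with \<open>0 \<le> c\<close> have "c > 0" by simp
  have "0 \<le> a + 2 * (- b / c) * b + (- b / c)^2 * c" by (rule nonneg)
  also have "\<dots> = a - b^2 / c"
    using \<open>c > 0\<close> by (simp add: field_simps power2_eq_square)
  finally show ?thesis
    using \<open>c > 0\<close> by (simp add: field_simps)
qed

definition kernel_form :: "('x \<Rightarrow> 'x \<Rightarrow> real) \<Rightarrow> 'x set \<Rightarrow> ('x \<Rightarrow> real) \<Rightarrow> ('x \<Rightarrow> real) \<Rightarrow> real" where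
  "kernel_form k S a b = (\<Sum>u\<in>S. \<Sum>w\<in>S. a u * b w * k u w)"

lemma kernel_form_nonneg:
  assumes "pd_kernel X k" "finite S" "S \<subseteq> X"
  shows "0 \<le> kernel_form k S a a"
  unfolding kernel_form_def
  using pd_kernel_quadratic_form_nonneg[OF assms(1,2), of id a] assms(3) by auto

lemma kernel_form_cauchy_schwarz:
  assumes kernel: "pd_kernel X k" and S: "finite S" "S \<subseteq> X"
  shows "\<bar>kernel_form k S a b\<bar> \<le> sqrt (kernel_form k S a a) * sqrt (kernel_form k S b b)"
proof -
  have "k u w = k w u" if "u \<in> S" "w \<in> S" for u w
    using kernel S that unfolding pd_kernel_def by blast
  then have sym: "kernel_form k S b a = kernel_form k S a b"
    unfolding kernel_form_def by (subst sum.swap) (auto intro!: sum.cong simp: mult.commute)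
  have "0 \<le> kernel_form k S a a + 2 * t * kernel_form k S a b + t^2 * kernel_form k S b b" for t
  proof -
    have "0 \<le> kernel_form k S (\<lambda>u. a u + t * b u) (\<lambda>u. a u + t * b u)"
      by (rule kernel_form_nonneg[OF kernel S])
    also have "\<dots> = kernel_form k S a a + t * kernel_form k S a b + t * kernel_form k S b a
        + t^2 * kernel_form k S b b"
      unfolding kernel_form_def
      by (simp add: algebra_simps sum.distrib sum_distrib_left power2_eq_square)
    finally show ?thesis using sym by simp
  qed
  then have "(kernel_form k S a b)^2 \<le> kernel_form k S a a * kernel_form k S b b"
    by (rule quadratic_nonneg_imp_discriminant_le[OF _ kernel_form_nonneg[OF kernel S]])
  then show ?thesis
    by (metis real_sqrt_abs real_sqrt_le_mono real_sqrt_mult)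
qed

text \<open>Coefficients, with respect to the kernel sections, of the residual
  \<open>k(x,\<cdot>) - \<Sum>\<^sub>i c\<^sub>i k(z\<^sub>i,\<cdot>)\<close>.\<close>
definition residual_coef :: "'x \<Rightarrow> ('i \<Rightarrow> real) \<Rightarrow> ('i \<Rightarrow> 'x) \<Rightarrow> 'i set \<Rightarrow> 'x \<Rightarrow> real" where
  "residual_coef x c z I w = (if w = x then 1 else 0) - (\<Sum>i\<in>I. if w = z i then c i else 0)"

definition kernel_residual :: "('x \<Rightarrow> 'x \<Rightarrow> real) \<Rightarrow> 'x \<Rightarrow> ('i \<Rightarrow> real) \<Rightarrow> ('i \<Rightarrow> 'x) \<Rightarrow> 'i set \<Rightarrow> 'x \<Rightarrow> real" where
  "kernel_residual k x c z I y = k x y - (\<Sum>i\<in>I. c i * k (z i) y)"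

definition residual_sqnorm :: "('x \<Rightarrow> 'x \<Rightarrow> real) \<Rightarrow> 'x \<Rightarrow> ('i \<Rightarrow> real) \<Rightarrow> ('i \<Rightarrow> 'x) \<Rightarrow> 'i set \<Rightarrow> real" where
  "residual_sqnorm k x c z I =
     kernel_residual k x c z I x - (\<Sum>j\<in>I. c j * kernel_residual k x c z I (z j))"

lemma sum_residual_coef:
  assumes S: "finite S" "x \<in> S" and zS: "z ` I \<subseteq> S"
  shows "(\<Sum>w\<in>S. residual_coef x c z I w * h w) = h x - (\<Sum>i\<in>I. c i * h (z i))"
proof -
  have "residual_coef x c z I w * h w
      = (if w = x then h w else 0) - (\<Sum>i\<in>I. if w = z i then c i * h (z i) else 0)" for w
    unfolding residual_coef_def by (auto simp: left_diff_distrib sum_distrib_right intro!: sum.cong)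
  then have "(\<Sum>w\<in>S. residual_coef x c z I w * h w)
      = (\<Sum>w\<in>S. if w = x then h w else 0) - (\<Sum>i\<in>I. \<Sum>w\<in>S. if w = z i then c i * h (z i) else 0)"
    by (simp add: sum_subtractf sum.swap[of _ S])
  also have "\<dots> = h x - (\<Sum>i\<in>I. c i * h (z i))"
    using S zS by (simp add: sum.delta' image_subset_iff)
  finally show ?thesis .
qed

lemma kernel_form_residual_coef:
  assumes S: "finite S" "x \<in> S" and zS: "z ` I \<subseteq> S"
    and g: "\<And>y. g y = (\<Sum>u\<in>S. a u * k u y)"
  shows "kernel_form k S a (residual_coef x c z I) = g x - (\<Sum>i\<in>I. c i * g (z i))"
proof -
  have "kernel_form k S a (residual_coef x c z I) = (\<Sum>w\<in>S. residual_coef x c z I w * g w)"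
    unfolding kernel_form_def g
    by (subst sum.swap) (simp add: sum_distrib_left algebra_simps)
  then show ?thesis by (simp add: sum_residual_coef[OF S zS])
qed

lemma kernel_form_residual_residual:
  assumes S: "finite S" "x \<in> S" and zS: "z ` I \<subseteq> S"
  shows "kernel_form k S (residual_coef x c z I) (residual_coef x c z I) = residual_sqnorm k x c z I"
proof -
  have "kernel_residual k x c z I y = (\<Sum>u\<in>S. residual_coef x c z I u * k u y)" for y
    unfolding kernel_residual_def using sum_residual_coef[OF S zS, where c=c and h="\<lambda>u. k u y"] by simp
  from kernel_form_residual_coef[OF S zS this] show ?thesis
    unfolding residual_sqnorm_def .
qed

lemma residual_sqnorm_nonneg:
  assumes "pd_kernel X k" "x \<in> X" "finite I" "z ` I \<subseteq> X"
  shows "0 \<le> residual_sqnorm k x c z I"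
proof -
  let ?S = "insert x (z ` I)"
  have "kernel_form k ?S (residual_coef x c z I) (residual_coef x c z I) = residual_sqnorm k x c z I"
    using assms(3) by (intro kernel_form_residual_residual) auto
  moreover have "0 \<le> kernel_form k ?S (residual_coef x c z I) (residual_coef x c z I)"
    using assms by (intro kernel_form_nonneg[OF assms(1)]) auto
  ultimately show ?thesis by simp
qed

lemma pre_fun_eq_sum_superset:
  assumes "finite S" "supp_coef a \<subseteq> S"
  shows "pre_fun k a y = (\<Sum>u\<in>S. a u * k u y)"
  unfolding pre_fun_def
  by (rule sum.mono_neutral_left) (use assms in \<open>auto simp: supp_coef_def\<close>)

lemma pre_sqnorm_eq_kernel_form:
  assumes "finite S" "supp_coef a \<subseteq> S"
  shows "pre_sqnorm k a = kernel_form k S a a"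
proof -
  have "pre_sqnorm k a = (\<Sum>u\<in>S. \<Sum>w\<in>supp_coef a. a u * a w * k u w)"
    unfolding pre_sqnorm_def
    by (rule sum.mono_neutral_left) (use assms in \<open>auto simp: supp_coef_def\<close>)
  also have "\<dots> = kernel_form k S a a"
    unfolding kernel_form_def
    by (intro sum.cong refl sum.mono_neutral_left) (use assms in \<open>auto simp: supp_coef_def\<close>)
  finally show ?thesis .
qed

lemma rkhs_ball_interpolation_error:
  assumes kernel: "pd_kernel X k" and f: "in_rkhs_ball X k f B" and x: "x \<in> X"
    and I: "finite I" and z: "z ` I \<subseteq> X"
  shows "\<bar>f x - (\<Sum>i\<in>I. c i * f (z i))\<bar> \<le> B * sqrt (residual_sqnorm k x c z I)"
proof -
  obtain \<alpha> L where fin: "\<And>j. fin_coef X (\<alpha> j)"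
    and lim: "\<And>y. y \<in> X \<Longrightarrow> (\<lambda>j. pre_fun k (\<alpha> j) y) \<longlonglongrightarrow> f y"
    and L: "(\<lambda>j. sqrt (pre_sqnorm k (\<alpha> j))) \<longlonglongrightarrow> L" "L \<le> B"
    using f unfolding in_rkhs_ball_def by blast
  define Q where "Q = residual_sqnorm k x c z I"
  define S where "S j = supp_coef (\<alpha> j) \<union> insert x (z ` I)" for j
  have S: "finite (S j)" "S j \<subseteq> X" "x \<in> S j" "supp_coef (\<alpha> j) \<subseteq> S j" for j
    using fin[of j] I x z unfolding S_def fin_coef_def by auto
  have zS: "z ` I \<subseteq> S j" for j
    unfolding S_def by auto
  define D where "D j = pre_fun k (\<alpha> j) x - (\<Sum>i\<in>I. c i * pre_fun k (\<alpha> j) (z i))" for j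
  have "\<bar>D j\<bar> \<le> sqrt (pre_sqnorm k (\<alpha> j)) * sqrt Q" for j
  proof -
    have "D j = kernel_form k (S j) (\<alpha> j) (residual_coef x c z I)"
      unfolding D_def
      by (rule kernel_form_residual_coef[symmetric, where g="pre_fun k (\<alpha> j)"])
         (use S zS in \<open>auto intro: pre_fun_eq_sum_superset[OF S(1,4)]\<close>)
    then show ?thesis
      using kernel_form_cauchy_schwarz[OF kernel S(1,2)[of j], of "\<alpha> j" "residual_coef x c z I"]
      by (simp add: Q_def kernel_form_residual_residual[OF S(1,3) zS]
          pre_sqnorm_eq_kernel_form[OF S(1,4)])
  qed
  moreover have "(\<lambda>j. \<bar>D j\<bar>) \<longlonglongrightarrow> \<bar>f x - (\<Sum>i\<in>I. c i * f (z i))\<bar>"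
    using z unfolding D_def by (intro tendsto_intros lim x) auto
  moreover have "(\<lambda>j. sqrt (pre_sqnorm k (\<alpha> j)) * sqrt Q) \<longlonglongrightarrow> L * sqrt Q"
    by (intro tendsto_mult_right L)
  ultimately have "\<bar>f x - (\<Sum>i\<in>I. c i * f (z i))\<bar> \<le> L * sqrt Q"
    by (intro LIMSEQ_le) auto
  also have "\<dots> \<le> B * sqrt Q"
    using residual_sqnorm_nonneg[OF kernel x I z] by (intro mult_right_mono L(2)) (simp add: Q_def)
  finally show ?thesis unfolding Q_def .
qed

section \<open>Posterior mean and variance\<close>

lemma matrix_inv_right:
  fixes A :: "'a::semiring_1^'n^'n"
  assumes "invertible A"
  shows "A ** matrix_inv A = mat 1"
proof -
  have "\<exists>A'. A ** A' = mat 1 \<and> A' ** A = mat 1"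
    using assms unfolding invertible_def .
  then show ?thesis
    unfolding matrix_inv_def by (rule someI2_ex) blast
qed

lemma invertible_mult_matrix_inv_vector:
  fixes A :: "'a::comm_semiring_1^'n::finite^'n"
  assumes "invertible A"
  shows "A *v (matrix_inv A *v b) = b"
  by (simp add: matrix_vector_mul_assoc matrix_inv_right[OF assms])

lemma gram_quadratic_form:
  "v \<bullet> (gram k Xn *v v) = (\<Sum>i\<in>UNIV. \<Sum>j\<in>UNIV. v$i * v$j * k (Xn i) (Xn j))"
  by (simp add: inner_vec_def matrix_vector_mult_def gram_def sum_distrib_left algebra_simps)

lemma regularized_gram_quadratic_form_ge:
  assumes "pd_kernel X k" "range Xn \<subseteq> X"
  shows "lam^2 * (v \<bullet> v) \<le> v \<bullet> ((gram k Xn + lam^2 *\<^sub>R mat 1) *v v)"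
proof -
  have "0 \<le> v \<bullet> (gram k Xn *v v)"
    unfolding gram_quadratic_form
    using pd_kernel_quadratic_form_nonneg[OF assms(1) finite_class.finite_UNIV assms(2), of "\<lambda>i. v$i"] by simp
  then show ?thesis
    by (simp add: matrix_vector_mult_add_rdistrib inner_add_right
        scaleR_matrix_vector_assoc[symmetric])
qed

lemma regularized_gram_invertible:
  fixes Xn :: "'n::finite \<Rightarrow> 'x"
  assumes "pd_kernel X k" "range Xn \<subseteq> X" "lam \<noteq> 0"
  shows "invertible (gram k Xn + lam^2 *\<^sub>R mat 1)"
  unfolding invertible_left_inverse matrix_left_invertible_ker
proof (intro allI impI)
  fix v :: "real^'n"
  assume "(gram k Xn + lam^2 *\<^sub>R mat 1) *v v = 0"
  then have "lam^2 * (v \<bullet> v) \<le> 0"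
    using regularized_gram_quadratic_form_ge[OF assms(1,2), of lam v] by simp
  then have "v \<bullet> v \<le> 0"
    using assms(3) by (simp add: mult_le_0_iff)
  then show "v = 0"
    by (metis antisym inner_ge_zero inner_eq_zero_iff)
qed

lemma regularized_gram_symmetric:
  assumes "pd_kernel X k" "range Xn \<subseteq> X"
  shows "transpose (gram k Xn + lam^2 *\<^sub>R mat 1) = gram k Xn + lam^2 *\<^sub>R mat 1"
proof -
  have "k (Xn i) (Xn j) = k (Xn j) (Xn i)" for i j
    using assms unfolding pd_kernel_def by blast
  then show ?thesis
    by (simp add: vec_eq_iff transpose_def gram_def mat_def)
qed

definition gp_weights :: "('x \<Rightarrow> 'x \<Rightarrow> real) \<Rightarrow> real \<Rightarrow> ('n::finite \<Rightarrow> 'x) \<Rightarrow> 'x \<Rightarrow> real^'n" where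
  "gp_weights k lam Xn x = matrix_inv (gram k Xn + lam^2 *\<^sub>R mat 1) *v kvec k Xn x"

lemma gp_mean_eq_inner_gp_weights:
  assumes "pd_kernel X k" "range Xn \<subseteq> X" "lam \<noteq> 0"
  shows "gp_mean k lam Xn Y x = gp_weights k lam Xn x \<bullet> Y"
proof -
  define A where "A = gram k Xn + lam^2 *\<^sub>R mat 1"
  have inv: "invertible A"
    unfolding A_def by (rule regularized_gram_invertible[OF assms])
  have "kvec k Xn x = A *v gp_weights k lam Xn x"
    unfolding gp_weights_def A_def[symmetric] by (simp add: invertible_mult_matrix_inv_vector[OF inv])
  also have "\<dots> = gp_weights k lam Xn x v* A"
    using regularized_gram_symmetric[OF assms(1,2)]
    by (simp add: vector_transpose_matrix[symmetric] A_def)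
  finally show ?thesis
    unfolding gp_mean_def A_def[symmetric]
    by (simp add: dot_lmul_matrix invertible_mult_matrix_inv_vector[OF inv])
qed

lemma gp_var_eq_residual_sqnorm:
  assumes kernel: "pd_kernel X k" and Xn: "range Xn \<subseteq> X" and x: "x \<in> X" and lam: "lam \<noteq> 0"
  defines "a \<equiv> gp_weights k lam Xn x"
  shows "gp_var k lam Xn x = residual_sqnorm k x (\<lambda>i. a$i) Xn UNIV + lam^2 * (a \<bullet> a)"
proof -
  have sym: "k (Xn i) x = k x (Xn i)" for i
    using kernel Xn x unfolding pd_kernel_def by blast
  have "(gram k Xn + lam^2 *\<^sub>R mat 1) *v a = kvec k Xn x"
    unfolding a_def gp_weights_def
    by (rule invertible_mult_matrix_inv_vector[OF regularized_gram_invertible[OF kernel Xn lam]])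
  then have "gram k Xn *v a + lam^2 *\<^sub>R a = kvec k Xn x"
    by (simp add: matrix_vector_mult_add_rdistrib scaleR_matrix_vector_assoc[symmetric])
  then have solve: "a \<bullet> (gram k Xn *v a) + lam^2 * (a \<bullet> a) = a \<bullet> kvec k Xn x"
    by (metis inner_add_right inner_scaleR_right)
  have "gp_var k lam Xn x = k x x - a \<bullet> kvec k Xn x"
    unfolding gp_var_def a_def gp_weights_def by (simp add: inner_commute)
  moreover have "(\<Sum>j\<in>UNIV. a$j * (\<Sum>i\<in>UNIV. a$i * k (Xn i) (Xn j))) = a \<bullet> (gram k Xn *v a)"
    unfolding gram_quadratic_form sum_distrib_left
    by (subst sum.swap) (simp add: mult_ac)
  moreover have "residual_sqnorm k x (\<lambda>i. a$i) Xn UNIV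
      = k x x - 2 * (a \<bullet> kvec k Xn x) + (\<Sum>j\<in>UNIV. a$j * (\<Sum>i\<in>UNIV. a$i * k (Xn i) (Xn j)))"
    unfolding residual_sqnorm_def kernel_residual_def
    by (simp add: inner_vec_def kvec_def sym sum_subtractf right_diff_distrib)
  ultimately show ?thesis
    using solve by simp
qed

lemma gp_weights_norm_le_gp_sd:
  assumes "pd_kernel X k" "range Xn \<subseteq> X" "x \<in> X" "lam > 0"
  shows "lam * norm (gp_weights k lam Xn x) \<le> gp_sd k lam Xn x"
proof -
  let ?a = "gp_weights k lam Xn x"
  have "lam * norm ?a = sqrt (lam^2 * (?a \<bullet> ?a))"
    using assms(4) by (simp add: real_sqrt_mult norm_eq_sqrt_inner)
  also have "\<dots> \<le> gp_sd k lam Xn x"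
    unfolding gp_sd_def gp_var_eq_residual_sqnorm[OF assms(1-3) less_imp_neq[OF assms(4), symmetric]]
    using residual_sqnorm_nonneg[OF assms(1,3) finite_class.finite_UNIV assms(2)] by simp
  finally show ?thesis .
qed

lemma gp_noise_free_error:
  assumes kernel: "pd_kernel X k" and f: "in_rkhs_ball X k f B" and "0 \<le> B"
    and Xn: "range Xn \<subseteq> X" and x: "x \<in> X" and lam: "lam \<noteq> 0"
  shows "\<bar>f x - gp_weights k lam Xn x \<bullet> (\<chi> i. f (Xn i))\<bar> \<le> B * gp_sd k lam Xn x"
proof -
  let ?a = "gp_weights k lam Xn x"
  have "\<bar>f x - ?a \<bullet> (\<chi> i. f (Xn i))\<bar> \<le> B * sqrt (residual_sqnorm k x (\<lambda>i. ?a$i) Xn UNIV)"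
    using rkhs_ball_interpolation_error[OF kernel f x finite_class.finite_UNIV Xn] by (simp add: inner_vec_def)
  also have "\<dots> \<le> B * gp_sd k lam Xn x"
    unfolding gp_sd_def gp_var_eq_residual_sqnorm[OF kernel Xn x lam]
    using \<open>0 \<le> B\<close> by (intro mult_left_mono) auto
  finally show ?thesis .
qed

section \<open>Tails of weighted sub-Gaussian noise\<close>

lemma (in prob_space) mgf_inner_indep_le:
  fixes eps :: "'n::finite \<Rightarrow> 'a \<Rightarrow> real" and c :: "real^'n"
  assumes indep: "indep_vars (\<lambda>_. borel) eps UNIV"
    and mgf_int: "\<And>i h. \<bar>h\<bar> \<le> h0 \<Longrightarrow> integrable M (\<lambda>\<omega>. exp (h * eps i \<omega>))"
    and mgf: "\<And>i h. \<bar>h\<bar> \<le> h0 \<Longrightarrow> expectation (\<lambda>\<omega>. exp (h * eps i \<omega>)) \<le> exp (h^2 * xi0 / 2)"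
    and h: "\<bar>h\<bar> * norm c \<le> h0"
  shows "integrable M (\<lambda>\<omega>. exp (h * (c \<bullet> (\<chi> i. eps i \<omega>))))"
    and "expectation (\<lambda>\<omega>. exp (h * (c \<bullet> (\<chi> i. eps i \<omega>)))) \<le> exp (h^2 * (norm c)^2 * xi0 / 2)"
proof -
  define Y where "Y i = (\<lambda>\<omega>. exp ((h * c$i) * eps i \<omega>))" for i
  have hc: "\<bar>h * c$i\<bar> \<le> h0" for i
    using h mult_left_mono[OF component_le_norm_cart[of c i], of "\<bar>h\<bar>"]
    by (simp add: abs_mult)
  have Y_indep: "indep_vars (\<lambda>_. borel) Y UNIV"
    unfolding Y_def by (rule indep_vars_compose2[OF indep]) simp
  have Y_int: "integrable M (Y i)" for i
    unfolding Y_def by (rule mgf_int[OF hc])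
  have prod_Y: "exp (h * (c \<bullet> (\<chi> i. eps i \<omega>))) = (\<Prod>i\<in>UNIV. Y i \<omega>)" for \<omega>
    unfolding Y_def by (simp add: inner_vec_def exp_sum sum_distrib_left mult.assoc)
  show "integrable M (\<lambda>\<omega>. exp (h * (c \<bullet> (\<chi> i. eps i \<omega>))))"
    unfolding prod_Y using indep_vars_integrable[OF finite_class.finite_UNIV Y_indep] Y_int by blast
  have "expectation (\<lambda>\<omega>. exp (h * (c \<bullet> (\<chi> i. eps i \<omega>)))) = (\<Prod>i\<in>UNIV. expectation (Y i))"
    unfolding prod_Y using indep_vars_lebesgue_integral[OF finite_class.finite_UNIV Y_indep] Y_int by blast
  also have "\<dots> \<le> (\<Prod>i\<in>UNIV. exp ((h * c$i)^2 * xi0 / 2))"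
    by (intro prod_mono conjI integral_nonneg_AE AE_I2) (auto simp: Y_def mgf[OF hc])
  also have "\<dots> = exp (h^2 * (norm c)^2 * xi0 / 2)"
    by (simp add: exp_sum[symmetric] norm_vec_def L2_set_def sum_divide_distrib[symmetric]
        sum_distrib_left[symmetric] sum_distrib_right[symmetric] power_mult_distrib sum_nonneg)
  finally show "expectation (\<lambda>\<omega>. exp (h * (c \<bullet> (\<chi> i. eps i \<omega>)))) \<le> exp (h^2 * (norm c)^2 * xi0 / 2)" .
qed

lemma (in prob_space) inner_indep_chernoff:
  fixes eps :: "'n::finite \<Rightarrow> 'a \<Rightarrow> real" and c :: "real^'n"
  assumes indep: "indep_vars (\<lambda>_. borel) eps UNIV"
    and mgf_int: "\<And>i h. \<bar>h\<bar> \<le> h0 \<Longrightarrow> integrable M (\<lambda>\<omega>. exp (h * eps i \<omega>))"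
    and mgf: "\<And>i h. \<bar>h\<bar> \<le> h0 \<Longrightarrow> expectation (\<lambda>\<omega>. exp (h * eps i \<omega>)) \<le> exp (h^2 * xi0 / 2)"
    and h: "0 < h" "h * norm c \<le> h0"
  shows "prob {\<omega> \<in> space M. c \<bullet> (\<chi> i. eps i \<omega>) > t} \<le> exp (h^2 * (norm c)^2 * xi0 / 2 - h * t)"
proof -
  have mgf_c: "integrable M (\<lambda>\<omega>. exp (h * (c \<bullet> (\<chi> i. eps i \<omega>))))"
      "expectation (\<lambda>\<omega>. exp (h * (c \<bullet> (\<chi> i. eps i \<omega>)))) \<le> exp (h^2 * (norm c)^2 * xi0 / 2)"
    using mgf_inner_indep_le[OF indep mgf_int mgf] h by simp_all
  have "prob {\<omega> \<in> space M. c \<bullet> (\<chi> i. eps i \<omega>) > t} \<le> prob {\<omega> \<in> space M. c \<bullet> (\<chi> i. eps i \<omega>) \<ge> t}"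
  proof (rule finite_measure_mono)
    have "eps i \<in> borel_measurable M" for i
      using indep unfolding indep_vars_def2 by auto
    then have [measurable]: "(\<lambda>\<omega>. c \<bullet> (\<chi> i. eps i \<omega>)) \<in> borel_measurable M"
      unfolding inner_vec_def by simp measurable
    show "{\<omega> \<in> space M. c \<bullet> (\<chi> i. eps i \<omega>) \<ge> t} \<in> events"
      by measurable
  qed auto
  also have "\<dots> \<le> exp (- h * t) * expectation (\<lambda>\<omega>. exp (h * (c \<bullet> (\<chi> i. eps i \<omega>))))"
    using Chernoff_ineq_ge[OF h(1), of "space M" "\<lambda>\<omega>. c \<bullet> (\<chi> i. eps i \<omega>)" t]
      integrable_mult_indicator[OF sets.top mgf_c(1)]
    by (simp add: set_integrable_def set_integral_space[OF mgf_c(1)])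
  also have "\<dots> \<le> exp (- h * t) * exp (h^2 * (norm c)^2 * xi0 / 2)"
    using mgf_c(2) by simp
  also have "\<dots> = exp (h^2 * (norm c)^2 * xi0 / 2 - h * t)"
    by (simp add: mult_exp_exp)
  finally show ?thesis .
qed

lemma (in prob_space) subgaussian_inner_tail:
  fixes eps :: "'n::finite \<Rightarrow> 'a \<Rightarrow> real" and c :: "real^'n"
  assumes indep: "indep_vars (\<lambda>_. borel) eps UNIV"
    and mgf_int: "\<And>i h. \<bar>h\<bar> \<le> h0 \<Longrightarrow> integrable M (\<lambda>\<omega>. exp (h * eps i \<omega>))"
    and mgf: "\<And>i h. \<bar>h\<bar> \<le> h0 \<Longrightarrow> expectation (\<lambda>\<omega>. exp (h * eps i \<omega>)) \<le> exp (h^2 * xi0 / 2)"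
    and h0: "h0 > 0" and xi0: "xi0 > 0" and \<delta>: "0 < \<delta>" "\<delta> < 1"
  shows "prob {\<omega> \<in> space M. c \<bullet> (\<chi> i. eps i \<omega>) > conf_beta 1 xi0 h0 \<delta> * norm c} \<le> \<delta>"
proof (cases "c = 0")
  case True
  then show ?thesis using \<delta> by simp
next
  case False
  define L where "L = ln (1 / \<delta>)"
  define \<nu> where "\<nu> = max xi0 (2 * L / h0^2)"
  define t where "t = conf_beta 1 xi0 h0 \<delta> * norm c"
  \<comment> \<open>minimises \<open>h\<^sup>2 \<nu> \<parallel>c\<parallel>\<^sup>2 / 2 - h t\<close>; the choice of \<open>\<nu>\<close> keeps it in the range \<open>h \<parallel>c\<parallel> \<le> h\<^sub>0\<close>\<close>
  define h where "h = sqrt (2 * L / \<nu>) / norm c"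
  have L: "L > 0" and \<nu>: "\<nu> > 0" "xi0 \<le> \<nu>" "2 * L / h0^2 \<le> \<nu>"
    unfolding L_def \<nu>_def using \<delta> xi0 by auto
  have hc: "h * norm c = sqrt (2 * L / \<nu>)" and "h > 0"
    unfolding h_def using False L \<nu> by auto
  have "2 * L / \<nu> \<le> h0^2"
    using \<nu> h0 L by (simp add: field_simps)
  then have "h * norm c \<le> h0"
    using hc h0 by (simp add: real_le_lsqrt)
  then have "prob {\<omega> \<in> space M. c \<bullet> (\<chi> i. eps i \<omega>) > t} \<le> exp (h^2 * (norm c)^2 * xi0 / 2 - h * t)"
    using inner_indep_chernoff[OF indep mgf_int mgf \<open>h > 0\<close>] by simp
  also have "\<dots> \<le> exp (L - 2 * L)"
  proof -
    have "h * t = sqrt (2 * L / \<nu>) * sqrt (2 * \<nu> * L)"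
      unfolding t_def conf_beta_def L_def[symmetric] \<nu>_def[symmetric] using hc by (simp add: ac_simps)
    also have "\<dots> = 2 * L"
      using L \<nu> by (simp add: real_sqrt_mult[symmetric] real_sqrt_unique power2_eq_square)
    finally have "h * t = 2 * L" .
    moreover have "h^2 * (norm c)^2 * xi0 / 2 = L * (xi0 / \<nu>)"
      using hc L \<nu> by (simp add: power_mult_distrib[symmetric])
    moreover have "L * (xi0 / \<nu>) \<le> L"
      using L \<nu> by (simp add: pos_divide_le_eq mult_left_mono)
    ultimately show ?thesis by simp
  qed
  also have "\<dots> = \<delta>"
    unfolding L_def using \<delta> by (simp add: ln_div)
  finally show ?thesis unfolding t_def .
qed

lemma (in prob_space) indep_set_vimages_imp_distr_pair:
  assumes X: "random_variable S X" and Y: "random_variable T Y"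
    and indep: "indep_set {X -` A \<inter> space M | A. A \<in> sets S} {Y -` A \<inter> space M | A. A \<in> sets T}"
  shows "distr M S X \<Otimes>\<^sub>M distr M T Y = distr M (S \<Otimes>\<^sub>M T) (\<lambda>\<omega>. (X \<omega>, Y \<omega>))"
proof -
  interpret PX: prob_space "distr M S X" by (rule prob_space_distr[OF X])
  interpret PY: prob_space "distr M T Y" by (rule prob_space_distr[OF Y])
  have XY: "(\<lambda>\<omega>. (X \<omega>, Y \<omega>)) \<in> measurable M (S \<Otimes>\<^sub>M T)"
    using X Y by measurable
  show ?thesis
  proof (rule pair_measure_eqI)
    fix A B assume A: "A \<in> sets (distr M S X)" and B: "B \<in> sets (distr M T Y)"
    have indep_AB: "prob ((X -` A \<inter> space M) \<inter> (Y -` B \<inter> space M))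
        = prob (X -` A \<inter> space M) * prob (Y -` B \<inter> space M)"
      using A B by (intro indep_setD[OF indep]) auto
    have "emeasure (distr M (S \<Otimes>\<^sub>M T) (\<lambda>\<omega>. (X \<omega>, Y \<omega>))) (A \<times> B)
        = prob ((X -` A \<inter> space M) \<inter> (Y -` B \<inter> space M))"
      using A B by (subst emeasure_distr[OF XY]) (auto simp: emeasure_eq_measure intro!: arg_cong[where f=prob])
    also have "\<dots> = ennreal (prob (X -` A \<inter> space M) * prob (Y -` B \<inter> space M))"
      by (simp add: indep_AB)
    also have "\<dots> = emeasure (distr M S X) A * emeasure (distr M T Y) B"
      using A B X Y by (simp add: emeasure_distr emeasure_eq_measure ennreal_mult)
    finally show "emeasure (distr M S X) A * emeasure (distr M T Y) B
        = emeasure (distr M (S \<Otimes>\<^sub>M T) (\<lambda>\<omega>. (X \<omega>, Y \<omega>))) (A \<times> B)" by simp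
  qed (simp_all add: PX.sigma_finite_measure_axioms PY.sigma_finite_measure_axioms)
qed

lemma (in prob_space) prob_indep_set_vimages_le:
  assumes X: "random_variable S X" and Y: "random_variable T Y"
    and indep: "indep_set {X -` A \<inter> space M | A. A \<in> sets S} {Y -` A \<inter> space M | A. A \<in> sets T}"
    and P: "{p \<in> space (S \<Otimes>\<^sub>M T). P (fst p) (snd p)} \<in> sets (S \<Otimes>\<^sub>M T)"
    and bound: "\<And>u. u \<in> space S \<Longrightarrow> prob {\<omega> \<in> space M. P u (Y \<omega>)} \<le> \<delta>"
    and "0 \<le> \<delta>"
  shows "prob {\<omega> \<in> space M. P (X \<omega>) (Y \<omega>)} \<le> \<delta>"
proof -
  note joint = indep_set_vimages_imp_distr_pair[OF X Y indep]
  interpret PX: prob_space "distr M S X" by (rule prob_space_distr[OF X])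
  interpret PY: prob_space "distr M T Y" by (rule prob_space_distr[OF Y])
  define Q where "Q = {p \<in> space (S \<Otimes>\<^sub>M T). P (fst p) (snd p)}"
  have "emeasure M {\<omega> \<in> space M. P (X \<omega>) (Y \<omega>)} = emeasure (distr M (S \<Otimes>\<^sub>M T) (\<lambda>\<omega>. (X \<omega>, Y \<omega>))) Q"
    using X Y P by (subst emeasure_distr)
      (auto simp: Q_def space_pair_measure measurable_space intro!: arg_cong[where f="emeasure M"])
  also have "\<dots> = \<integral>\<^sup>+ u. emeasure (distr M T Y) (Pair u -` Q) \<partial>distr M S X"
    unfolding joint[symmetric] by (rule PY.emeasure_pair_measure_alt) (simp add: Q_def P)
  also have "\<dots> \<le> \<integral>\<^sup>+ u. ennreal \<delta> \<partial>distr M S X"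
  proof (intro nn_integral_mono)
    fix u assume u: "u \<in> space (distr M S X)"
    have "Pair u -` Q \<in> sets T"
      by (rule sets_Pair1[of _ S]) (simp add: Q_def P)
    moreover have "Y -` (Pair u -` Q) \<inter> space M = {\<omega> \<in> space M. P u (Y \<omega>)}"
      using u measurable_space[OF Y] by (auto simp: Q_def space_pair_measure)
    ultimately have "emeasure (distr M T Y) (Pair u -` Q) = prob {\<omega> \<in> space M. P u (Y \<omega>)}"
      by (simp add: emeasure_distr[OF Y] emeasure_eq_measure)
    also have "\<dots> \<le> ennreal \<delta>"
      using bound u by (auto intro: ennreal_leI)
    finally show "emeasure (distr M T Y) (Pair u -` Q) \<le> ennreal \<delta>" .
  qed
  also have "\<dots> = ennreal \<delta>"
    using PX.emeasure_space_1 by simp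
  finally show ?thesis
    using \<open>0 \<le> \<delta>\<close> by (simp add: emeasure_eq_measure)
qed

section \<open>Measurability\<close>

lemma borel_measurable_vec_lambda:
  fixes f :: "'n::finite \<Rightarrow> 'a \<Rightarrow> 'b::euclidean_space"
  assumes "\<And>i. f i \<in> borel_measurable M"
  shows "(\<lambda>\<omega>. \<chi> i. f i \<omega>) \<in> borel_measurable M"
  by (subst borel_measurable_euclidean_space)
     (auto simp: Basis_vec_def inner_axis intro!: borel_measurable_inner assms)

lemma borel_measurable_vec_nth:
  "(\<lambda>u::'b::euclidean_space^'n::finite. u$i) \<in> borel_measurable borel"
  by (intro borel_measurable_continuous_onI continuous_intros)

lemma borel_measurable_kernel_compose:
  fixes k :: "'b::second_countable_topology \<Rightarrow> 'b \<Rightarrow> real"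
  assumes k: "(\<lambda>p. k (fst p) (snd p)) \<in> borel_measurable borel"
    and "g \<in> borel_measurable M" "h \<in> borel_measurable M"
  shows "(\<lambda>\<omega>. k (g \<omega>) (h \<omega>)) \<in> borel_measurable M"
proof -
  have "(\<lambda>\<omega>. (g \<omega>, h \<omega>)) \<in> borel_measurable M"
    using assms(2,3) by (simp add: borel_prod[symmetric])
  from measurable_compose[OF this k] show ?thesis by simp
qed

lemma rkhs_ball_borel_measurable_compose:
  fixes k :: "'b::second_countable_topology \<Rightarrow> 'b \<Rightarrow> real"
  assumes f: "in_rkhs_ball X k f B" and k: "(\<lambda>p. k (fst p) (snd p)) \<in> borel_measurable borel"
    and g: "g \<in> borel_measurable M" and gX: "\<And>\<omega>. \<omega> \<in> space M \<Longrightarrow> g \<omega> \<in> X"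
  shows "(\<lambda>\<omega>. f (g \<omega>)) \<in> borel_measurable M"
proof -
  obtain \<alpha> where lim: "\<And>y. y \<in> X \<Longrightarrow> (\<lambda>j. pre_fun k (\<alpha> j) y) \<longlonglongrightarrow> f y"
    using f unfolding in_rkhs_ball_def by blast
  show ?thesis
  proof (rule borel_measurable_LIMSEQ_real)
    show "(\<lambda>j. pre_fun k (\<alpha> j) (g \<omega>)) \<longlonglongrightarrow> f (g \<omega>)" if "\<omega> \<in> space M" for \<omega>
      using lim gX[OF that] by blast
    show "(\<lambda>\<omega>. pre_fun k (\<alpha> j) (g \<omega>)) \<in> borel_measurable M" for j
      unfolding pre_fun_def
      by (intro borel_measurable_sum borel_measurable_times borel_measurable_const
          borel_measurable_kernel_compose[OF k borel_measurable_const g])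
  qed
qed

text \<open>\<^const>\<open>matrix_inv\<close> is defined by choice, so its measurability is out of reach; Cramer's
  rule is an explicit measurable formula for \<open>matrix_inv A *v b\<close> when \<open>det A \<noteq> 0\<close>.\<close>
definition cramer_solve :: "real^'n::finite^'n \<Rightarrow> real^'n \<Rightarrow> real^'n" where
  "cramer_solve A b = (\<chi> j. det (\<chi> i l. if l = j then b$i else A$i$l) / det A)"

lemma matrix_inv_mult_eq_cramer_solve:
  fixes A :: "real^'n::finite^'n"
  assumes "det A \<noteq> 0"
  shows "matrix_inv A *v b = cramer_solve A b"
proof -
  have "A *v (matrix_inv A *v b) = b"
    using assms invertible_det_nz invertible_mult_matrix_inv_vector by blast
  then show ?thesis
    using cramer[OF assms] unfolding cramer_solve_def by blast
qed

lemma borel_measurable_det: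
  fixes A :: "'a \<Rightarrow> real^'n::finite^'n"
  assumes "\<And>i j. (\<lambda>\<omega>. A \<omega> $ i $ j) \<in> borel_measurable M"
  shows "(\<lambda>\<omega>. det (A \<omega>)) \<in> borel_measurable M"
  unfolding det_def using assms by measurable

lemma borel_measurable_cramer_solve:
  fixes A :: "'a \<Rightarrow> real^'n::finite^'n" and b :: "'a \<Rightarrow> real^'n"
  assumes A: "\<And>i j. (\<lambda>\<omega>. A \<omega> $ i $ j) \<in> borel_measurable M"
    and b: "\<And>i. (\<lambda>\<omega>. b \<omega> $ i) \<in> borel_measurable M"
  shows "(\<lambda>\<omega>. cramer_solve (A \<omega>) (b \<omega>)) \<in> borel_measurable M"
proof -
  have "(\<lambda>\<omega>. det (\<chi> i l. if l = j then b \<omega> $ i else A \<omega> $ i $ l)) \<in> borel_measurable M" for j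
  proof (rule borel_measurable_det)
    show "(\<lambda>\<omega>. (\<chi> i l. if l = j then b \<omega> $ i else A \<omega> $ i $ l) $ i $ l) \<in> borel_measurable M" for i l
      by (cases "l = j") (simp_all add: A b)
  qed
  then show ?thesis
    unfolding cramer_solve_def
    by (intro borel_measurable_vec_lambda borel_measurable_divide borel_measurable_det[OF A])
qed

lemma gp_weights_eq_cramer_solve:
  assumes "pd_kernel X k" "range Xn \<subseteq> X" "lam \<noteq> 0"
  shows "gp_weights k lam Xn x = cramer_solve (gram k Xn + lam^2 *\<^sub>R mat 1) (kvec k Xn x)"
  unfolding gp_weights_def
  by (intro matrix_inv_mult_eq_cramer_solve iffD1[OF invertible_det_nz]
      regularized_gram_invertible[OF assms])

lemma borel_measurable_cramer_gp_weights:
  fixes k :: "'b::euclidean_space \<Rightarrow> 'b \<Rightarrow> real" and Xs :: "'n::finite \<Rightarrow> 'a \<Rightarrow> 'b"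
  assumes k: "(\<lambda>p. k (fst p) (snd p)) \<in> borel_measurable borel"
    and Xs: "\<And>i. Xs i \<in> borel_measurable M"
  shows "(\<lambda>\<omega>. cramer_solve (gram k (\<lambda>i. Xs i \<omega>) + lam^2 *\<^sub>R mat 1) (kvec k (\<lambda>i. Xs i \<omega>) x))
           \<in> borel_measurable M"
  by (intro borel_measurable_cramer_solve)
     (auto simp: gram_def kvec_def mat_def intro!: borel_measurable_add borel_measurable_kernel_compose[OF k] Xs)

lemma gp_var_eq_gp_weights:
  "gp_var k lam Xn x = k x x - kvec k Xn x \<bullet> gp_weights k lam Xn x"
  unfolding gp_var_def gp_weights_def ..

lemma borel_measurable_gp_sample:
  fixes k :: "'b::euclidean_space \<Rightarrow> 'b \<Rightarrow> real" and Xs :: "'n::finite \<Rightarrow> 'a \<Rightarrow> 'b"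
  assumes kernel: "pd_kernel X k" and k: "(\<lambda>p. k (fst p) (snd p)) \<in> borel_measurable borel"
    and lam: "lam \<noteq> 0"
    and Xs: "\<And>i. Xs i \<in> borel_measurable M" and Xs_in: "\<And>i \<omega>. \<omega> \<in> space M \<Longrightarrow> Xs i \<omega> \<in> X"
    and Y: "Y \<in> borel_measurable M"
  shows "(\<lambda>\<omega>. gp_mean k lam (\<lambda>i. Xs i \<omega>) (Y \<omega>) x) \<in> borel_measurable M"
    and "(\<lambda>\<omega>. gp_sd k lam (\<lambda>i. Xs i \<omega>) x) \<in> borel_measurable M"
proof -
  define W where "W \<omega> = cramer_solve (gram k (\<lambda>i. Xs i \<omega>) + lam^2 *\<^sub>R mat 1) (kvec k (\<lambda>i. Xs i \<omega>) x)" for \<omega>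
  have W: "W \<in> borel_measurable M"
    unfolding W_def by (rule borel_measurable_cramer_gp_weights[OF k Xs])
  have kv: "(\<lambda>\<omega>. kvec k (\<lambda>i. Xs i \<omega>) x) \<in> borel_measurable M"
    unfolding kvec_def
    by (intro borel_measurable_vec_lambda borel_measurable_kernel_compose[OF k borel_measurable_const Xs])
  have sample: "range (\<lambda>i. Xs i \<omega>) \<subseteq> X" if "\<omega> \<in> space M" for \<omega>
    using Xs_in that by auto
  have W_eq: "gp_weights k lam (\<lambda>i. Xs i \<omega>) x = W \<omega>" if "\<omega> \<in> space M" for \<omega>
    unfolding W_def by (rule gp_weights_eq_cramer_solve[OF kernel sample[OF that] lam])
  have "(\<lambda>\<omega>. W \<omega> \<bullet> Y \<omega>) \<in> borel_measurable M"
    using W Y by (rule borel_measurable_inner)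
  then show "(\<lambda>\<omega>. gp_mean k lam (\<lambda>i. Xs i \<omega>) (Y \<omega>) x) \<in> borel_measurable M"
    by (rule measurable_cong[THEN iffD1, rotated])
       (simp add: W_eq gp_mean_eq_inner_gp_weights[OF kernel sample lam])
  have "(\<lambda>\<omega>. sqrt (k x x - kvec k (\<lambda>i. Xs i \<omega>) x \<bullet> W \<omega>)) \<in> borel_measurable M"
    using kv W by measurable
  then show "(\<lambda>\<omega>. gp_sd k lam (\<lambda>i. Xs i \<omega>) x) \<in> borel_measurable M"
    by (rule measurable_cong[THEN iffD1, rotated])
       (simp add: gp_sd_def gp_var_eq_gp_weights W_eq)
qed

lemma sets_gp_deviation_event:
  fixes k :: "'b::euclidean_space \<Rightarrow> 'b \<Rightarrow> real" and Xs :: "'n::finite \<Rightarrow> 'a \<Rightarrow> 'b"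
  assumes kernel: "pd_kernel X k" and k: "(\<lambda>p. k (fst p) (snd p)) \<in> borel_measurable borel"
    and f: "in_rkhs_ball X k f B" and lam: "lam \<noteq> 0"
    and Xs: "\<And>i. Xs i \<in> borel_measurable M" and Xs_in: "\<And>i \<omega>. \<omega> \<in> space M \<Longrightarrow> Xs i \<omega> \<in> X"
    and eps: "\<And>i. eps i \<in> borel_measurable M"
  shows "{\<omega> \<in> space M. s * (gp_mean k lam (\<lambda>i. Xs i \<omega>) (\<chi> i. f (Xs i \<omega>) + eps i \<omega>) x - f x)
           \<le> c * gp_sd k lam (\<lambda>i. Xs i \<omega>) x} \<in> sets M"
proof -
  have "(\<lambda>\<omega>. \<chi> i. f (Xs i \<omega>) + eps i \<omega>) \<in> borel_measurable M"
    using rkhs_ball_borel_measurable_compose[OF f k Xs Xs_in] eps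
    by (auto intro!: borel_measurable_vec_lambda)
  then have "(\<lambda>\<omega>. gp_mean k lam (\<lambda>i. Xs i \<omega>) (\<chi> i. f (Xs i \<omega>) + eps i \<omega>) x) \<in> borel_measurable M"
    "(\<lambda>\<omega>. gp_sd k lam (\<lambda>i. Xs i \<omega>) x) \<in> borel_measurable M"
    using borel_measurable_gp_sample[where Xs=Xs, OF kernel k lam] Xs Xs_in by auto
  then show ?thesis by measurable
qed

section \<open>Confidence bounds\<close>

lemma gp_mean_deviation_le:
  assumes kernel: "pd_kernel X k" and f: "in_rkhs_ball X k f B" and "0 \<le> B"
    and Xn: "range Xn \<subseteq> X" and x: "x \<in> X" and lam: "lam > 0" and s: "\<bar>s\<bar> = 1" and "0 \<le> \<beta>"
    and noise: "s * (gp_weights k lam Xn x \<bullet> E) \<le> lam * \<beta> * norm (gp_weights k lam Xn x)"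
  shows "s * (gp_mean k lam Xn (\<chi> i. f (Xn i) + E$i) x - f x) \<le> (B + \<beta>) * gp_sd k lam Xn x"
proof -
  let ?a = "gp_weights k lam Xn x"
  have "(\<chi> i. f (Xn i) + E$i) = (\<chi> i. f (Xn i)) + E"
    by (simp add: vec_eq_iff)
  then have "gp_mean k lam Xn (\<chi> i. f (Xn i) + E$i) x = ?a \<bullet> (\<chi> i. f (Xn i)) + ?a \<bullet> E"
    using gp_mean_eq_inner_gp_weights[OF kernel Xn] lam by (simp add: inner_add_right)
  moreover have "s * (?a \<bullet> (\<chi> i. f (Xn i)) - f x) \<le> \<bar>f x - ?a \<bullet> (\<chi> i. f (Xn i))\<bar>"
    using s abs_ge_self[of "s * (?a \<bullet> (\<chi> i. f (Xn i)) - f x)"]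
    by (simp add: abs_mult abs_minus_commute)
  moreover have "\<bar>f x - ?a \<bullet> (\<chi> i. f (Xn i))\<bar> \<le> B * gp_sd k lam Xn x"
    using gp_noise_free_error[OF kernel f \<open>0 \<le> B\<close> Xn x] lam by simp
  moreover have "lam * \<beta> * norm ?a \<le> \<beta> * gp_sd k lam Xn x"
    using gp_weights_norm_le_gp_sd[OF kernel Xn x lam] \<open>0 \<le> \<beta>\<close>
    by (metis mult.assoc mult.commute mult_left_mono)
  ultimately show ?thesis
    using noise by (simp add: algebra_simps)
qed

lemma (in prob_space) weighted_subgaussian_tail_indep:
  fixes Z :: "'a \<Rightarrow> 'b::topological_space" and W :: "'b \<Rightarrow> real^'n::finite"
    and eps :: "'n \<Rightarrow> 'a \<Rightarrow> real"
  assumes Z: "Z \<in> borel_measurable M" and eps_meas: "\<And>i. eps i \<in> borel_measurable M"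
    and W: "W \<in> borel_measurable borel"
    and indep: "indep_set {Z -` A \<inter> space M | A. A \<in> sets borel}
        {(\<lambda>\<omega>. \<chi> i. eps i \<omega>) -` A \<inter> space M | A. A \<in> sets borel}"
    and eps_indep: "indep_vars (\<lambda>_. borel) eps UNIV"
    and mgf_int: "\<And>i h. \<bar>h\<bar> \<le> h0 \<Longrightarrow> integrable M (\<lambda>\<omega>. exp (h * eps i \<omega>))"
    and mgf: "\<And>i h. \<bar>h\<bar> \<le> h0 \<Longrightarrow> expectation (\<lambda>\<omega>. exp (h * eps i \<omega>)) \<le> exp (h^2 * xi0 / 2)"
    and h0: "h0 > 0" and xi0: "xi0 > 0" and \<delta>: "0 < \<delta>" "\<delta> < 1"
  shows "prob {\<omega> \<in> space M. W (Z \<omega>) \<bullet> (\<chi> i. eps i \<omega>) > conf_beta 1 xi0 h0 \<delta> * norm (W (Z \<omega>))} \<le> \<delta>"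
proof (rule prob_indep_set_vimages_le[OF Z _ indep,
      where P="\<lambda>u e. W u \<bullet> e > conf_beta 1 xi0 h0 \<delta> * norm (W u)"])
  show "(\<lambda>\<omega>. \<chi> i. eps i \<omega>) \<in> borel_measurable M"
    by (intro borel_measurable_vec_lambda eps_meas)
  show "{p \<in> space (borel \<Otimes>\<^sub>M borel). W (fst p) \<bullet> snd p > conf_beta 1 xi0 h0 \<delta> * norm (W (fst p))}
      \<in> sets (borel \<Otimes>\<^sub>M (borel :: (real^'n) measure))"
    using W by measurable
  show "prob {\<omega> \<in> space M. W u \<bullet> (\<chi> i. eps i \<omega>) > conf_beta 1 xi0 h0 \<delta> * norm (W u)} \<le> \<delta>" for u
    by (rule subgaussian_inner_tail[OF eps_indep mgf_int mgf h0 xi0 \<delta>])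
qed (use \<delta> in simp)

lemma (in prob_space) prob_ge_of_compl_subset:
  assumes "A \<in> events" "prob A \<le> \<delta>" "B \<in> events" "space M - A \<subseteq> B"
  shows "1 - \<delta> \<le> prob B"
  using finite_measure_mono[OF assms(4,3)] prob_compl[OF assms(1)] assms(2) by simp

lemma conf_beta_nonneg:
  assumes "0 \<le> lam" "0 < \<delta>" "\<delta> \<le> 1"
  shows "0 \<le> conf_beta lam xi0 h0 \<delta>"
  using assms unfolding conf_beta_def
  by (auto intro!: mult_nonneg_nonneg divide_nonneg_nonneg simp: le_max_iff_disj)

lemma mult_conf_beta:
  assumes "lam \<noteq> 0"
  shows "lam * conf_beta lam xi0 h0 \<delta> = conf_beta 1 xi0 h0 \<delta>"
  using assms unfolding conf_beta_def by simp

lemma gp_confidence_one_sided: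
  fixes M :: "'a measure"
    and X :: "(real^'d) set"
    and k :: "real^'d \<Rightarrow> real^'d \<Rightarrow> real"
    and Xs :: "'n::finite \<Rightarrow> 'a \<Rightarrow> real^'d"
    and eps :: "'n \<Rightarrow> 'a \<Rightarrow> real"
  assumes P: "prob_space M"
    and kernel: "pd_kernel X k"
    and k_meas: "(\<lambda>p. k (fst p) (snd p)) \<in> borel_measurable borel"
    and f: "in_rkhs_ball X k f B" and B: "0 \<le> B"
    and lam: "lam > 0"
    and Xs_meas: "\<And>i. Xs i \<in> borel_measurable M"
    and Xs_in: "\<And>i \<omega>. \<omega> \<in> space M \<Longrightarrow> Xs i \<omega> \<in> X"
    and eps_meas: "\<And>i. eps i \<in> borel_measurable M"
    and eps_indep: "prob_space.indep_vars M (\<lambda>_. borel) eps UNIV"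
    and h0: "h0 > 0" and xi0: "xi0 > 0"
    and mgf_int: "\<And>i h. \<bar>h\<bar> \<le> h0 \<Longrightarrow> integrable M (\<lambda>\<omega>. exp (h * eps i \<omega>))"
    and mgf: "\<And>i h. \<bar>h\<bar> \<le> h0 \<Longrightarrow>
                prob_space.expectation M (\<lambda>\<omega>. exp (h * eps i \<omega>)) \<le> exp (h^2 * xi0 / 2)"
    and indep_XE: "prob_space.indep_set M
        {(\<lambda>\<omega>. \<chi> i. Xs i \<omega>) -` S \<inter> space M | S. S \<in> sets (borel :: ((real^'d)^'n) measure)}
        {(\<lambda>\<omega>. \<chi> i. eps i \<omega>) -` S \<inter> space M | S. S \<in> sets (borel :: (real^'n) measure)}"
    and \<delta>: "0 < \<delta>" "\<delta> < 1"
    and x: "x \<in> X"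
    and s: "\<bar>s\<bar> = 1"
  shows "1 - \<delta> \<le> measure M {\<omega> \<in> space M.
           s * (gp_mean k lam (\<lambda>i. Xs i \<omega>) (\<chi> i. f (Xs i \<omega>) + eps i \<omega>) x - f x)
             \<le> (B + conf_beta lam xi0 h0 \<delta>) * gp_sd k lam (\<lambda>i. Xs i \<omega>) x}"
    (is "_ \<le> measure M ?good")
proof -
  interpret prob_space M by (rule P)
  define Xv where "Xv = (\<lambda>\<omega>. \<chi> i. Xs i \<omega>)"
  \<comment> \<open>the weights as a measurable function on all samples, as conditioning on \<open>Xv\<close> requires\<close>
  define W where "W u = cramer_solve (gram k (\<lambda>i. u$i) + lam^2 *\<^sub>R mat 1) (kvec k (\<lambda>i. u$i) x)"
    for u :: "(real^'d)^'n"
  have Xv: "Xv \<in> borel_measurable M"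
    unfolding Xv_def by (intro borel_measurable_vec_lambda Xs_meas)
  have W: "W \<in> borel_measurable borel"
    unfolding W_def by (rule borel_measurable_cramer_gp_weights[OF k_meas borel_measurable_vec_nth])
  have sample: "range (\<lambda>i. Xs i \<omega>) \<subseteq> X" if "\<omega> \<in> space M" for \<omega>
    using Xs_in that by auto
  have W_Xv: "W (Xv \<omega>) = gp_weights k lam (\<lambda>i. Xs i \<omega>) x" if "\<omega> \<in> space M" for \<omega>
    unfolding W_def Xv_def using gp_weights_eq_cramer_solve[OF kernel sample[OF that]] lam
    by (simp add: vec_lambda_inverse)
  define bad where "bad = {\<omega> \<in> space M.
    (s *\<^sub>R W (Xv \<omega>)) \<bullet> (\<chi> i. eps i \<omega>) > conf_beta 1 xi0 h0 \<delta> * norm (s *\<^sub>R W (Xv \<omega>))}"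
  have "bad \<in> events"
    unfolding bad_def using W Xv borel_measurable_vec_lambda[OF eps_meas] by measurable
  moreover have "prob bad \<le> \<delta>"
    unfolding bad_def using W
    by (intro weighted_subgaussian_tail_indep[OF Xv eps_meas _ indep_XE[folded Xv_def]
          eps_indep mgf_int mgf h0 xi0 \<delta>, where W="\<lambda>u. s *\<^sub>R W u"]) measurable
  moreover have "?good \<in> events"
    using lam by (intro sets_gp_deviation_event[OF kernel k_meas f _ Xs_meas Xs_in eps_meas]) simp
  moreover have "space M - bad \<subseteq> ?good"
  proof safe
    fix \<omega> assume \<omega>: "\<omega> \<in> space M" "\<omega> \<notin> bad"
    let ?a = "gp_weights k lam (\<lambda>i. Xs i \<omega>) x"
    have "s * (?a \<bullet> (\<chi> i. eps i \<omega>)) \<le> lam * conf_beta lam xi0 h0 \<delta> * norm ?a"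
      using \<omega> s lam by (simp add: bad_def W_Xv mult_conf_beta not_less)
    from gp_mean_deviation_le[OF kernel f B sample[OF \<omega>(1)] x lam s conf_beta_nonneg this]
    show "s * (gp_mean k lam (\<lambda>i. Xs i \<omega>) (\<chi> i. f (Xs i \<omega>) + eps i \<omega>) x - f x)
             \<le> (B + conf_beta lam xi0 h0 \<delta>) * gp_sd k lam (\<lambda>i. Xs i \<omega>) x"
      using lam \<delta> by simp
  qed
  ultimately show ?thesis
    by (rule prob_ge_of_compl_subset)
qed

theorem theorem2:
  fixes M :: "'a measure"
    and X :: "(real^'d) set"
    and k :: "real^'d \<Rightarrow> real^'d \<Rightarrow> real"
    and f :: "real^'d \<Rightarrow> real"
    and Xs :: "'n::finite \<Rightarrow> 'a \<Rightarrow> real^'d"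
    and eps :: "'n \<Rightarrow> 'a \<Rightarrow> real"
    and B lam h0 xi0 \<delta> :: real
    and x :: "real^'d"
  assumes P: "prob_space M"
    and kernel: "pd_kernel X k"
    and k_meas: "(\<lambda>p. k (fst p) (snd p)) \<in> borel_measurable borel"
    and B: "B > 0"
    and f: "in_rkhs_ball X k f B"
    and lam: "lam > 0"
    and Xs_meas: "\<And>i. Xs i \<in> borel_measurable M"
    and Xs_in: "\<And>i \<omega>. \<omega> \<in> space M \<Longrightarrow> Xs i \<omega> \<in> X"
    and eps_meas: "\<And>i. eps i \<in> borel_measurable M"
    and eps_indep: "prob_space.indep_vars M (\<lambda>_. borel) eps UNIV"
    and eps_ident: "\<And>i j. distr M borel (eps i) = distr M borel (eps j)"
    and eps_int: "\<And>i. integrable M (eps i)"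
    and eps_mean: "\<And>i. prob_space.expectation M (eps i) = 0"
    and h0: "h0 > 0" and xi0: "xi0 > 0"
    and mgf_int: "\<And>i h. \<bar>h\<bar> \<le> h0 \<Longrightarrow> integrable M (\<lambda>\<omega>. exp (h * eps i \<omega>))"
    and mgf: "\<And>i h. \<bar>h\<bar> \<le> h0 \<Longrightarrow>
                prob_space.expectation M (\<lambda>\<omega>. exp (h * eps i \<omega>)) \<le> exp (h^2 * xi0 / 2)"
    and indep_XE: "prob_space.indep_set M
        {(\<lambda>\<omega>. \<chi> i. Xs i \<omega>) -` S \<inter> space M | S. S \<in> sets (borel :: ((real^'d)^'n) measure)}
        {(\<lambda>\<omega>. \<chi> i. eps i \<omega>) -` S \<inter> space M | S. S \<in> sets (borel :: (real^'n) measure)}"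
    and \<delta>: "0 < \<delta>" "\<delta> < 1"
    and x: "x \<in> X"
  shows "measure M {\<omega> \<in> space M.
            f x \<le> gp_mean k lam (\<lambda>i. Xs i \<omega>) (\<chi> i. f (Xs i \<omega>) + eps i \<omega>) x
                   + (B + conf_beta lam xi0 h0 \<delta>) * gp_sd k lam (\<lambda>i. Xs i \<omega>) x} \<ge> 1 - \<delta>
       \<and> measure M {\<omega> \<in> space M.
            f x \<ge> gp_mean k lam (\<lambda>i. Xs i \<omega>) (\<chi> i. f (Xs i \<omega>) + eps i \<omega>) x
                   - (B + conf_beta lam xi0 h0 \<delta>) * gp_sd k lam (\<lambda>i. Xs i \<omega>) x} \<ge> 1 - \<delta>"
proof -
  have one_sided: "1 - \<delta> \<le> measure M {\<omega> \<in> space M.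
           s * (gp_mean k lam (\<lambda>i. Xs i \<omega>) (\<chi> i. f (Xs i \<omega>) + eps i \<omega>) x - f x)
             \<le> (B + conf_beta lam xi0 h0 \<delta>) * gp_sd k lam (\<lambda>i. Xs i \<omega>) x}"
    if "\<bar>s\<bar> = 1" for s
    using B by (intro gp_confidence_one_sided[OF P kernel k_meas f _ lam Xs_meas Xs_in eps_meas
          eps_indep h0 xi0 mgf_int mgf indep_XE \<delta> x that]) simp
  from one_sided[of "-1"] one_sided[of 1] show ?thesis
    by (simp add: algebra_simps)
qed

end
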